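(* Let $n\ge 1$, $m\ge 2$, $0\le k\le n-1$ with $(m,k)\ne(2,0)$. Then the class $\mathcal{C}^k_{ac}$ of all complete $k$-bounded acyclic CP-nets over $n$ variables of domain size $m$, over the instance space $\mathcal{X}_{swap}$, is not extremal.
   Context: Variables $V=\{v_1,\dots,v_n\}$, each with a finite domain of size $m$. An outcome assigns a value to every variable; $\mathcal{O}_X$ denotes assignments to $X\subseteq V$. A complete CP-net specifies for each $v_i$ a parent set $Pa(v_i)\subseteq V\setminus\{v_i\}$ and, for each context $\gamma\in\mathcal{O}_{Pa(v_i)}$, a strict total order $\succ^{v_i}_\gamma$ on $D_{v_i}$; parents are non-dummy. Acyclic: graph with edges $(v_j,v_i)$, $v_j\in Pa(v_i)$, acyclic; $k$-bounded: all $|Pa(v_i)|\le k$. Improving flip: changing only $v_i$ to a value preferred under $\succ^{v_i}_{o[Pa(v_i)]}$; $o'\succ o$ iff a nonempty sequence of improving flips leads from $o$ to $o'$. A swap is an ordered pair $x=(x.1,x.2)$ of outcomes differing in exactly one variable; $\mathcal{X}_{swap}$ contains exactly one ordering of each such pair (fixed arbitrarily); a CP-net $N$ is the concept $c_N(x)=1$ iff $x.1\succ x.2$. A class $\mathcal{C}$ over $\mathcal{X}$ shatters $S\subseteq\mathcal{X}$ if every labeling of $S$ is realized; it strongly shatters $S$ if some subclass $\mathcal{C}'\subseteq\mathcal{C}$ shatters $S$ and all concepts in $\mathcal{C}'$ agree on every instance of $\mathcal{X}\setminus S$. $\mathcal{C}$ is extremal if it strongly shatters every set it shatters. *)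

theory Defs
  imports "HOL-Library.FuncSet"
begin

(* Variables are 0..<n, every domain is {0..<m}.
   An outcome is an extensional function in {0..<n} \<rightarrow>\<^sub>E {0..<m}. *)
type_synonym outcome = "nat \<Rightarrow> nat"

definition outcomes :: "nat \<Rightarrow> nat \<Rightarrow> outcome set" where
  "outcomes n m = {0..<n} \<rightarrow>\<^sub>E {0..<m}"

(* A CP-net is given by a parent map Pa and conditional preference tables:
   pref i \<gamma> a b  means  a \<succ>^{v_i}_\<gamma> b. *)
type_synonym cpnet = "(nat \<Rightarrow> nat set) \<times> (nat \<Rightarrow> (nat \<Rightarrow> nat) \<Rightarrow> nat \<Rightarrow> nat \<Rightarrow> bool)"

definition contexts :: "nat \<Rightarrow> (nat \<Rightarrow> nat set) \<Rightarrow> nat \<Rightarrow> (nat \<Rightarrow> nat) set" where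
  "contexts m Pa i = Pa i \<rightarrow>\<^sub>E {0..<m}"

definition strict_total_order_on :: "nat set \<Rightarrow> (nat \<Rightarrow> nat \<Rightarrow> bool) \<Rightarrow> bool" where
  "strict_total_order_on D r \<longleftrightarrow>
     (\<forall>a b. r a b \<longrightarrow> a \<in> D \<and> b \<in> D) \<and>
     (\<forall>a. \<not> r a a) \<and>
     (\<forall>a b c. r a b \<longrightarrow> r b c \<longrightarrow> r a c) \<and>
     (\<forall>a\<in>D. \<forall>b\<in>D. a \<noteq> b \<longrightarrow> r a b \<or> r b a)"

(* complete CP-net over n variables with domain size m, non-dummy parents *)
definition is_cpnet :: "nat \<Rightarrow> nat \<Rightarrow> cpnet \<Rightarrow> bool" where
  "is_cpnet n m N \<longleftrightarrow>
     (\<forall>i<n. fst N i \<subseteq> {0..<n} - {i}) \<and>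
     (\<forall>i<n. \<forall>\<gamma>\<in>contexts m (fst N) i. strict_total_order_on {0..<m} (snd N i \<gamma>)) \<and>
     (\<forall>i<n. \<forall>j\<in>fst N i. \<exists>\<gamma>\<in>contexts m (fst N) i. \<exists>\<gamma>'\<in>contexts m (fst N) i.
         (\<forall>l\<in>fst N i - {j}. \<gamma> l = \<gamma>' l) \<and>
         (\<exists>a<m. \<exists>b<m. snd N i \<gamma> a b \<and> \<not> snd N i \<gamma>' a b))"

definition is_acyclic_cpnet :: "nat \<Rightarrow> cpnet \<Rightarrow> bool" where
  "is_acyclic_cpnet n N \<longleftrightarrow> acyclic {(j, i). i < n \<and> j \<in> fst N i}"

definition is_k_bounded :: "nat \<Rightarrow> nat \<Rightarrow> cpnet \<Rightarrow> bool" where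
  "is_k_bounded n k N \<longleftrightarrow> (\<forall>i<n. card (fst N i) \<le> k)"

definition improving_flip :: "nat \<Rightarrow> nat \<Rightarrow> cpnet \<Rightarrow> outcome \<Rightarrow> outcome \<Rightarrow> bool" where
  "improving_flip n m N p q \<longleftrightarrow>
     p \<in> outcomes n m \<and> q \<in> outcomes n m \<and>
     (\<exists>i<n. (\<forall>j. j \<noteq> i \<longrightarrow> p j = q j) \<and>
            snd N i (restrict p (fst N i)) (q i) (p i))"

(* cp_better n m N q p  means  q \<succ> p *)
definition cp_better :: "nat \<Rightarrow> nat \<Rightarrow> cpnet \<Rightarrow> outcome \<Rightarrow> outcome \<Rightarrow> bool" where
  "cp_better n m N q p \<longleftrightarrow> (p, q) \<in> {(p, q). improving_flip n m N p q}\<^sup>+"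

definition is_swap :: "nat \<Rightarrow> nat \<Rightarrow> outcome \<Rightarrow> outcome \<Rightarrow> bool" where
  "is_swap n m p q \<longleftrightarrow> p \<in> outcomes n m \<and> q \<in> outcomes n m \<and>
     (\<exists>i<n. p i \<noteq> q i \<and> (\<forall>j. j \<noteq> i \<longrightarrow> p j = q j))"

definition is_swap_space :: "nat \<Rightarrow> nat \<Rightarrow> (outcome \<times> outcome) set \<Rightarrow> bool" where
  "is_swap_space n m X \<longleftrightarrow>
     (\<forall>x\<in>X. is_swap n m (fst x) (snd x)) \<and>
     (\<forall>p q. is_swap n m p q \<longrightarrow> ((p, q) \<in> X \<longleftrightarrow> (q, p) \<notin> X))"

definition cp_concept :: "nat \<Rightarrow> nat \<Rightarrow> (outcome \<times> outcome) set \<Rightarrow> cpnet \<Rightarrow> (outcome \<times> outcome \<Rightarrow> bool)" where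
  "cp_concept n m X N = (\<lambda>x. x \<in> X \<and> cp_better n m N (fst x) (snd x))"

definition C_ac :: "nat \<Rightarrow> nat \<Rightarrow> nat \<Rightarrow> (outcome \<times> outcome) set \<Rightarrow> (outcome \<times> outcome \<Rightarrow> bool) set" where
  "C_ac n m k X = {cp_concept n m X N | N. is_cpnet n m N \<and> is_acyclic_cpnet n N \<and> is_k_bounded n k N}"

definition shatters :: "('x \<Rightarrow> bool) set \<Rightarrow> 'x set \<Rightarrow> bool" where
  "shatters C S \<longleftrightarrow> (\<forall>L\<subseteq>S. \<exists>c\<in>C. \<forall>x\<in>S. c x = (x \<in> L))"

definition strongly_shatters :: "'x set \<Rightarrow> ('x \<Rightarrow> bool) set \<Rightarrow> 'x set \<Rightarrow> bool" where
  "strongly_shatters X C S \<longleftrightarrow>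
     (\<exists>C'\<subseteq>C. shatters C' S \<and> (\<forall>c\<in>C'. \<forall>c'\<in>C'. \<forall>x\<in>X - S. c x = c' x))"

definition extremal :: "'x set \<Rightarrow> ('x \<Rightarrow> bool) set \<Rightarrow> bool" where
  "extremal X C \<longleftrightarrow> (\<forall>S\<subseteq>X. shatters C S \<longrightarrow> strongly_shatters X C S)"

end

theory Submission
  imports Defs
begin

text \<open>
  Separable CP-nets (no parents) already shatter suitable two-element sets S of swaps.
  Strong shattering would require all four labellings of S to be realised by concepts that
  also agree on the swaps outside S. For m \<ge> 3 take the swaps 0\<leftrightarrow>1 and 1\<leftrightarrow>2 of one
  variable: by transitivity of the conditional preference order, the label of 0\<leftrightarrow>2 excludes
  one labelling of S. For m = 2 (hence k \<ge> 1 and n \<ge> 2) take the flips of each of the first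
  two variables while the other one is 0: a labelling of S contrary to the labels of the same
  flips while the other one is 1 makes each variable a parent of the other, a cycle.
  Labels of swaps can be read off the preference tables because acyclic CP-nets are consistent.
\<close>

lemma restrict_context_mem:
  assumes "is_cpnet n m N" "p \<in> outcomes n m" "i < n"
  shows "restrict p (fst N i) \<in> contexts m (fst N) i"
proof -
  have "fst N i \<subseteq> {0..<n}" using assms(1,3) unfolding is_cpnet_def by auto
  then show ?thesis using assms(2) unfolding contexts_def outcomes_def by (auto simp: PiE_iff)
qed

lemma strict_total_order_on_context:
  assumes "is_cpnet n m N" "p \<in> outcomes n m" "i < n"
  shows "strict_total_order_on {0..<m} (snd N i (restrict p (fst N i)))"
  using assms restrict_context_mem[OF assms] unfolding is_cpnet_def by blast

lemma strict_total_order_on_asym_iff: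
  assumes "strict_total_order_on D R" "a \<in> D" "b \<in> D" "a \<noteq> b"
  shows "R b a \<longleftrightarrow> \<not> R a b"
  using assms unfolding strict_total_order_on_def by metis

lemma strict_total_order_on_triple:
  assumes "strict_total_order_on D R" "a \<in> D" "b \<in> D" "c \<in> D"
    and "a \<noteq> b" "b \<noteq> c" "a \<noteq> c" and "R a b = R b c"
  shows "R a c = R a b"
  using assms unfolding strict_total_order_on_def by metis

lemma restrict_eq_if_agree_outside:
  assumes "\<And>l. l \<noteq> j \<Longrightarrow> p l = q l" "j \<notin> A"
  shows "restrict p A = restrict q A"
  using assms by (intro restrict_ext) metis

lemma parent_if_preference_varies:
  assumes "\<And>l. l \<noteq> j \<Longrightarrow> p l = q l"
    and "snd N i (restrict p (fst N i)) a b \<noteq> snd N i (restrict q (fst N i)) a b"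
  shows "j \<in> fst N i"
  using assms restrict_eq_if_agree_outside[of j p q "fst N i"] by metis

subsection \<open>Acyclic CP-nets are consistent\<close>

lemma acyclic_cpnet_levels:
  assumes cp: "is_cpnet n m N" and ac: "is_acyclic_cpnet n N"
  obtains t :: "nat \<Rightarrow> nat" where "\<And>i j. i < n \<Longrightarrow> j \<in> fst N i \<Longrightarrow> t j < t i"
proof
  define E where "E = {(j, i). i < n \<and> j \<in> fst N i}"
  have acE: "acyclic E" using ac unfolding is_acyclic_cpnet_def E_def by simp
  have "E \<subseteq> {0..<n} \<times> {0..<n}" using cp unfolding E_def is_cpnet_def by auto
  then have closure_sub: "E\<^sup>+ \<subseteq> {0..<n} \<times> {0..<n}" by (rule trancl_subset_Sigma)
  fix i j assume "i < n" "j \<in> fst N i"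
  then have ji: "(j, i) \<in> E" unfolding E_def by auto
  have "{j'. (j', j) \<in> E\<^sup>+} \<subseteq> {j'. (j', i) \<in> E\<^sup>+}" using ji by (auto intro: trancl_into_trancl)
  moreover have "j \<in> {j'. (j', i) \<in> E\<^sup>+}" using ji by auto
  moreover have "j \<notin> {j'. (j', j) \<in> E\<^sup>+}" using acE unfolding acyclic_def by auto
  moreover have "finite {j'. (j', i) \<in> E\<^sup>+}"
    by (rule finite_subset[of _ "{0..<n}"]) (use closure_sub in auto)
  ultimately show "card {j'. (j', j) \<in> E\<^sup>+} < card {j'. (j', i) \<in> E\<^sup>+}"
    by (metis psubset_card_mono psubsetI)
qed

text \<open>
  Parents lie on lower levels than their children, so at the lowest level where \<open>p\<close> and
  \<open>q\<close> differ all variables see the same context in \<open>p\<close> and \<open>q\<close>; this makes the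
  relation transitive.
\<close>

definition lex_improvement :: "nat \<Rightarrow> nat \<Rightarrow> cpnet \<Rightarrow> (nat \<Rightarrow> nat) \<Rightarrow> (outcome \<times> outcome) set" where
  "lex_improvement n m N t = {(p, q). p \<in> outcomes n m \<and> q \<in> outcomes n m \<and>
     (\<exists>l. (\<forall>u<n. t u < l \<longrightarrow> p u = q u) \<and>
          (\<forall>u<n. t u = l \<longrightarrow> snd N u (restrict p (fst N u)) (q u) (p u) \<or> q u = p u) \<and>
          (\<exists>u<n. t u = l \<and> q u \<noteq> p u))}"

lemma improving_flip_lex_improvement:
  assumes "is_cpnet n m N" "improving_flip n m N p q"
  shows "(p, q) \<in> lex_improvement n m N t"
proof -
  obtain i where po: "p \<in> outcomes n m" and qo: "q \<in> outcomes n m" and i: "i < n"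
    and off: "\<forall>j. j \<noteq> i \<longrightarrow> p j = q j" and better: "snd N i (restrict p (fst N i)) (q i) (p i)"
    using assms(2) unfolding improving_flip_def by blast
  have "q i \<noteq> p i"
    using strict_total_order_on_context[OF assms(1) po i] better
    unfolding strict_total_order_on_def by metis
  with i off better have "\<exists>l. (\<forall>u<n. t u < l \<longrightarrow> p u = q u) \<and>
      (\<forall>u<n. t u = l \<longrightarrow> snd N u (restrict p (fst N u)) (q u) (p u) \<or> q u = p u) \<and>
      (\<exists>u<n. t u = l \<and> q u \<noteq> p u)"
    by (intro exI[of _ "t i"]) (metis less_irrefl)
  then show ?thesis unfolding lex_improvement_def using po qo by blast
qed

lemma trans_lex_improvement:
  assumes cp: "is_cpnet n m N" and levels: "\<And>i j. i < n \<Longrightarrow> j \<in> fst N i \<Longrightarrow> t j < t i"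
  shows "trans (lex_improvement n m N t)"
proof (rule transI)
  have parents_below: "j < n" if "i < n" "j \<in> fst N i" for i j
    using cp that unfolding is_cpnet_def by fastforce
  have context_eq: "restrict p (fst N w) = restrict q (fst N w)"
    if "\<forall>u<n. t u < t w \<longrightarrow> p u = q u" "w < n" for p q :: outcome and w
    using that levels parents_below by (auto simp: restrict_def)
  fix p q r
  assume "(p, q) \<in> lex_improvement n m N t" "(q, r) \<in> lex_improvement n m N t"
  then obtain l1 l2 where po: "p \<in> outcomes n m" and ro: "r \<in> outcomes n m"
    and a1: "\<forall>u<n. t u < l1 \<longrightarrow> p u = q u"
    and b1: "\<forall>u<n. t u = l1 \<longrightarrow> snd N u (restrict p (fst N u)) (q u) (p u) \<or> q u = p u"
    and c1: "\<exists>u<n. t u = l1 \<and> q u \<noteq> p u"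
    and a2: "\<forall>u<n. t u < l2 \<longrightarrow> q u = r u"
    and b2: "\<forall>u<n. t u = l2 \<longrightarrow> snd N u (restrict q (fst N u)) (r u) (q u) \<or> r u = q u"
    and c2: "\<exists>u<n. t u = l2 \<and> r u \<noteq> q u"
    unfolding lex_improvement_def by blast
  have intro: "(p, r) \<in> lex_improvement n m N t"
    if "\<forall>u<n. t u < l \<longrightarrow> p u = r u"
      "\<forall>u<n. t u = l \<longrightarrow> snd N u (restrict p (fst N u)) (r u) (p u) \<or> r u = p u"
      "\<exists>u<n. t u = l \<and> r u \<noteq> p u" for l
    unfolding lex_improvement_def using po ro that by blast
  consider "l1 < l2" | "l2 < l1" | "l1 = l2" by linarith
  then show "(p, r) \<in> lex_improvement n m N t"
  proof cases
    case 1
    show ?thesis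
    proof (rule intro[of l1])
      show "\<forall>u<n. t u < l1 \<longrightarrow> p u = r u" using a1 a2 1 by auto
      show "\<forall>u<n. t u = l1 \<longrightarrow> snd N u (restrict p (fst N u)) (r u) (p u) \<or> r u = p u"
        using b1 a2 1 by auto
      show "\<exists>u<n. t u = l1 \<and> r u \<noteq> p u" using c1 a2 1 by auto
    qed
  next
    case 2
    have same_context: "restrict p (fst N u) = restrict q (fst N u)" if "u < n" "t u = l2" for u
      using context_eq a1 2 that by (metis order.strict_trans)
    show ?thesis
    proof (rule intro[of l2])
      show "\<forall>u<n. t u < l2 \<longrightarrow> p u = r u" using a1 a2 2 by auto
      show "\<forall>u<n. t u = l2 \<longrightarrow> snd N u (restrict p (fst N u)) (r u) (p u) \<or> r u = p u"
        using b2 a1 2 same_context by auto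
      show "\<exists>u<n. t u = l2 \<and> r u \<noteq> p u" using c2 a1 2 by auto
    qed
  next
    case 3
    have same_context: "restrict p (fst N u) = restrict q (fst N u)" if "u < n" "t u = l1" for u
      using context_eq a1 that by blast
    have weak: "snd N u (restrict p (fst N u)) (r u) (p u) \<or> r u = p u"
      and strict: "q u \<noteq> p u \<Longrightarrow> r u \<noteq> p u" if u: "u < n" "t u = l1" for u
    proof -
      define R where "R = snd N u (restrict p (fst N u))"
      have "strict_total_order_on {0..<m} R"
        unfolding R_def using strict_total_order_on_context[OF cp po u(1)] .
      then have trans_R: "R a b \<Longrightarrow> R b c \<Longrightarrow> R a c" and irrefl_R: "\<not> R a a" for a b c
        unfolding strict_total_order_on_def by blast+
      have qp: "R (q u) (p u) \<or> q u = p u" using b1 u unfolding R_def by blast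
      have rq: "R (r u) (q u) \<or> r u = q u" using b2 u 3 same_context[OF u] unfolding R_def by auto
      show "snd N u (restrict p (fst N u)) (r u) (p u) \<or> r u = p u"
        using qp rq trans_R unfolding R_def by metis
      show "r u \<noteq> p u" if "q u \<noteq> p u"
        using qp rq trans_R irrefl_R that by metis
    qed
    show ?thesis
    proof (rule intro[of l1])
      show "\<forall>u<n. t u < l1 \<longrightarrow> p u = r u" using a1 a2 3 by auto
      show "\<forall>u<n. t u = l1 \<longrightarrow> snd N u (restrict p (fst N u)) (r u) (p u) \<or> r u = p u"
        using weak by blast
      show "\<exists>u<n. t u = l1 \<and> r u \<noteq> p u" using c1 strict by blast
    qed
  qed
qed

lemma acyclic_cpnet_consistent:
  assumes cp: "is_cpnet n m N" and ac: "is_acyclic_cpnet n N"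
  shows "\<not> cp_better n m N p p"
proof
  obtain t :: "nat \<Rightarrow> nat" where levels: "\<And>i j. i < n \<Longrightarrow> j \<in> fst N i \<Longrightarrow> t j < t i"
    using acyclic_cpnet_levels[OF cp ac] by blast
  assume "cp_better n m N p p"
  then have "(p, p) \<in> {(p, q). improving_flip n m N p q}\<^sup>+" unfolding cp_better_def .
  moreover have "{(p, q). improving_flip n m N p q} \<subseteq> lex_improvement n m N t"
    using improving_flip_lex_improvement[OF cp] by blast
  ultimately have "(p, p) \<in> (lex_improvement n m N t)\<^sup>+" using trancl_mono by blast
  then have "(p, p) \<in> lex_improvement n m N t"
    using trancl_id[OF trans_lex_improvement[OF cp levels]] by simp
  then show False unfolding lex_improvement_def by auto
qed

subsection \<open>Labels of swaps\<close>

lemma cp_better_swap_iff: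
  assumes cp: "is_cpnet n m N" and ac: "is_acyclic_cpnet n N"
    and po: "p \<in> outcomes n m" and qo: "q \<in> outcomes n m" and i: "i < n"
    and ne: "p i \<noteq> q i" and off: "\<forall>j. j \<noteq> i \<longrightarrow> p j = q j"
  shows "cp_better n m N p q \<longleftrightarrow> snd N i (restrict p (fst N i)) (p i) (q i)"
proof -
  have "i \<notin> fst N i" using cp i unfolding is_cpnet_def by auto
  then have same_context: "restrict q (fst N i) = restrict p (fst N i)"
    using off by (intro restrict_eq_if_agree_outside) auto
  have flip_qp: "improving_flip n m N q p" if "snd N i (restrict p (fst N i)) (p i) (q i)"
    unfolding improving_flip_def using po qo i off that same_context by metis
  have flip_pq: "improving_flip n m N p q" if "snd N i (restrict p (fst N i)) (q i) (p i)"
    unfolding improving_flip_def using po qo i off that by metis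
  have in_domain: "p i \<in> {0..<m}" "q i \<in> {0..<m}"
    using po qo i unfolding outcomes_def by (auto simp: PiE_iff)
  show ?thesis
  proof
    assume better: "cp_better n m N p q"
    show "snd N i (restrict p (fst N i)) (p i) (q i)"
    proof (rule ccontr)
      assume "\<not> snd N i (restrict p (fst N i)) (p i) (q i)"
      then have "snd N i (restrict p (fst N i)) (q i) (p i)"
        using strict_total_order_on_asym_iff[OF strict_total_order_on_context[OF cp po i] in_domain ne]
        by blast
      then have "cp_better n m N q p" using flip_pq unfolding cp_better_def by blast
      with better have "cp_better n m N q q" unfolding cp_better_def by (meson trancl_trans)
      then show False using acyclic_cpnet_consistent[OF cp ac] by blast
    qed
  next
    assume "snd N i (restrict p (fst N i)) (p i) (q i)"
    then show "cp_better n m N p q" using flip_qp unfolding cp_better_def by blast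
  qed
qed

definition orient :: "(outcome \<times> outcome) set \<Rightarrow> outcome \<Rightarrow> outcome \<Rightarrow> outcome \<times> outcome" where
  "orient X p q = (if (p, q) \<in> X then (p, q) else (q, p))"

lemma orient_cases: "orient X p q = (p, q) \<or> orient X p q = (q, p)"
  unfolding orient_def by simp

lemma orient_eq_imp_doubleton_eq: "orient X p q = orient X p' q' \<Longrightarrow> {p, q} = {p', q'}"
  using orient_cases[of X p q] orient_cases[of X p' q'] by auto

lemma orient_mem:
  assumes X: "is_swap_space n m X" and "p \<in> outcomes n m" "q \<in> outcomes n m" "i < n"
    and "p i \<noteq> q i" "\<forall>j. j \<noteq> i \<longrightarrow> p j = q j"
  shows "orient X p q \<in> X"
proof -
  have "is_swap n m p q" unfolding is_swap_def using assms by blast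
  then show ?thesis using X unfolding is_swap_space_def orient_def by auto
qed

lemma cp_concept_orient:
  assumes cp: "is_cpnet n m N" and ac: "is_acyclic_cpnet n N" and X: "is_swap_space n m X"
    and po: "p \<in> outcomes n m" and qo: "q \<in> outcomes n m" and i: "i < n"
    and ne: "p i \<noteq> q i" and off: "\<forall>j. j \<noteq> i \<longrightarrow> p j = q j"
  shows "cp_concept n m X N (orient X p q) \<longleftrightarrow>
    (snd N i (restrict p (fst N i)) (p i) (q i) \<longleftrightarrow> (p, q) \<in> X)"
proof (cases "(p, q) \<in> X")
  case True
  then show ?thesis
    unfolding orient_def cp_concept_def using cp_better_swap_iff[OF cp ac po qo i ne off] by simp
next
  case False
  have "(q, p) \<in> X" using orient_mem[OF X po qo i ne off] False unfolding orient_def by simp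
  moreover have "i \<notin> fst N i" using cp i unfolding is_cpnet_def by auto
  then have "restrict q (fst N i) = restrict p (fst N i)"
    using off by (intro restrict_eq_if_agree_outside) auto
  then have "cp_better n m N q p \<longleftrightarrow> snd N i (restrict p (fst N i)) (q i) (p i)"
    using cp_better_swap_iff[OF cp ac qo po i] ne off by metis
  moreover have "p i \<in> {0..<m}" "q i \<in> {0..<m}"
    using po qo i unfolding outcomes_def by (auto simp: PiE_iff)
  ultimately show ?thesis
    unfolding orient_def cp_concept_def
    using False strict_total_order_on_asym_iff[OF strict_total_order_on_context[OF cp po i] _ _ ne]
    by simp
qed

subsection \<open>Separable CP-nets\<close>

lemma exists_rank_permutation:
  "\<exists>r :: nat \<Rightarrow> nat. inj r \<and> (r 1 < r 0 \<longleftrightarrow> d1) \<and> (r 2 < r 1 \<longleftrightarrow> d2)"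
proof -
  define r :: "nat \<Rightarrow> nat" where
    "r a = (if a = 0 then (if d1 then 2 else if d2 then 1 else 0)
      else if a = 1 then (if d1 then (if d2 then 1 else 0) else if d2 then 2 else 1)
      else if a = 2 then (if d1 then (if d2 then 0 else 1) else if d2 then 0 else 2) else a)" for a
  have "inj r" unfolding r_def inj_def by auto
  moreover have "(r 1 < r 0 \<longleftrightarrow> d1) \<and> (r 2 < r 1 \<longleftrightarrow> d2)" unfolding r_def by auto
  ultimately show ?thesis by blast
qed

lemma exists_separable_cpnet:
  fixes d1 d2 :: "nat \<Rightarrow> bool"
  shows "\<exists>N. is_cpnet n m N \<and> is_acyclic_cpnet n N \<and> is_k_bounded n k N \<and>
    (\<forall>i \<gamma>. (snd N i \<gamma> 0 1 \<longleftrightarrow> 1 < m \<and> d1 i) \<and> (snd N i \<gamma> 1 2 \<longleftrightarrow> 2 < m \<and> d2 i))"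
proof -
  have "\<forall>i. \<exists>r :: nat \<Rightarrow> nat. inj r \<and> (r 1 < r 0 \<longleftrightarrow> d1 i) \<and> (r 2 < r 1 \<longleftrightarrow> d2 i)"
    using exists_rank_permutation by blast
  then obtain r :: "nat \<Rightarrow> nat \<Rightarrow> nat"
    where r: "\<And>i. inj (r i) \<and> (r i 1 < r i 0 \<longleftrightarrow> d1 i) \<and> (r i 2 < r i 1 \<longleftrightarrow> d2 i)"
    by metis
  define N :: cpnet where "N = (\<lambda>_. {}, \<lambda>i \<gamma> a b. a < m \<and> b < m \<and> r i b < r i a)"
  have "strict_total_order_on {0..<m} (snd N i \<gamma>)" for i \<gamma>
    using conjunct1[OF r[of i]] unfolding strict_total_order_on_def N_def
    by (auto simp: inj_def) (metis linorder_neqE_nat)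
  then have "is_cpnet n m N" unfolding is_cpnet_def by (simp add: N_def)
  moreover have "is_acyclic_cpnet n N" unfolding is_acyclic_cpnet_def N_def acyclic_def by simp
  moreover have "is_k_bounded n k N" unfolding is_k_bounded_def N_def by simp
  moreover have "(snd N i \<gamma> 0 1 \<longleftrightarrow> 1 < m \<and> d1 i) \<and> (snd N i \<gamma> 1 2 \<longleftrightarrow> 2 < m \<and> d2 i)" for i \<gamma>
    using r[of i] unfolding N_def by auto
  ultimately show ?thesis by blast
qed

lemma cp_concept_in_C_ac:
  assumes "is_cpnet n m N" "is_acyclic_cpnet n N" "is_k_bounded n k N"
  shows "cp_concept n m X N \<in> C_ac n m k X"
  using assms unfolding C_ac_def by blast

lemma C_ac_elim:
  assumes "c \<in> C_ac n m k X"
  obtains N where "is_cpnet n m N" "is_acyclic_cpnet n N" "c = cp_concept n m X N"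
  using assms unfolding C_ac_def by blast

subsection \<open>Non-extremality\<close>

lemma not_extremal_two_points:
  assumes x: "x1 \<in> X" "x2 \<in> X" "x1 \<noteq> x2"
    and shatter: "\<And>b1 b2. \<exists>c\<in>C. c x1 = b1 \<and> c x2 = b2"
    and rigid: "\<And>c0. c0 \<in> C \<Longrightarrow> \<exists>b1 b2. \<forall>c\<in>C. c x1 = b1 \<longrightarrow> c x2 = b2 \<longrightarrow>
       (\<exists>y\<in>X - {x1, x2}. c y \<noteq> c0 y)"
  shows "\<not> extremal X C"
proof
  assume extremal: "extremal X C"
  have shattered: "shatters C {x1, x2}" unfolding shatters_def
  proof (intro allI impI)
    fix L
    obtain c where "c \<in> C" "c x1 = (x1 \<in> L)" "c x2 = (x2 \<in> L)"
      using shatter[of "x1 \<in> L" "x2 \<in> L"] by blast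
    then show "\<exists>c\<in>C. \<forall>x\<in>{x1, x2}. c x = (x \<in> L)" by blast
  qed
  have "{x1, x2} \<subseteq> X" using x by simp
  then have "strongly_shatters X C {x1, x2}"
    using extremal shattered unfolding extremal_def by blast
  then obtain C' where C': "C' \<subseteq> C" "shatters C' {x1, x2}"
    and agree: "\<forall>c\<in>C'. \<forall>c'\<in>C'. \<forall>x\<in>X - {x1, x2}. c x = c' x"
    unfolding strongly_shatters_def by blast
  obtain c0 where c0: "c0 \<in> C'"
    using C'(2)[unfolded shatters_def, rule_format, of "{}"] by blast
  with C'(1) have "c0 \<in> C" by blast
  then obtain b1 b2
    where b: "\<forall>c\<in>C. c x1 = b1 \<longrightarrow> c x2 = b2 \<longrightarrow> (\<exists>y\<in>X - {x1, x2}. c y \<noteq> c0 y)"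
    using rigid by blast
  define L where "L = {x. x = x1 \<and> b1 \<or> x = x2 \<and> b2}"
  have "L \<subseteq> {x1, x2}" unfolding L_def by blast
  then obtain c where c: "c \<in> C'" "\<forall>x\<in>{x1, x2}. c x = (x \<in> L)"
    using C'(2)[unfolded shatters_def, rule_format] by blast
  then have "c x1 = b1" "c x2 = b2" using x(3) unfolding L_def by auto
  moreover have "c \<in> C" using C'(1) c(1) by blast
  ultimately obtain y where "y \<in> X - {x1, x2}" "c y \<noteq> c0 y" using b by blast
  then show False using agree c(1) c0 by blast
qed

definition base_outcome :: "nat \<Rightarrow> nat \<Rightarrow> nat \<Rightarrow> outcome" where
  "base_outcome n a b = restrict ((\<lambda>_. 0)(0 := a, 1 := b)) {0..<n}"

lemma base_outcome_mem: "a < m \<Longrightarrow> b < m \<Longrightarrow> base_outcome n a b \<in> outcomes n m"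
  unfolding base_outcome_def outcomes_def by (auto simp: PiE_iff)

lemma base_outcome_simps:
  "0 < n \<Longrightarrow> base_outcome n a b 0 = a"
  "1 < n \<Longrightarrow> base_outcome n a b 1 = b"
  "j \<noteq> 0 \<Longrightarrow> base_outcome n a b j = base_outcome n a' b j"
  "j \<noteq> 1 \<Longrightarrow> base_outcome n a b j = base_outcome n a b' j"
  unfolding base_outcome_def by auto

lemma not_extremal_large_domain:
  assumes n: "1 \<le> n" and m: "3 \<le> m" and X: "is_swap_space n m X"
  shows "\<not> extremal X (C_ac n m k X)"
proof -
  define u where "u a = base_outcome n a 0" for a
  define x where "x a b = orient X (u a) (u b)" for a b
  define \<sigma> where "\<sigma> a b = ((u a, u b) \<in> X)" for a b
  have n0: "0 < n" using n by simp
  have u0: "u a 0 = a" and off: "\<forall>j. j \<noteq> 0 \<longrightarrow> u a j = u b j" for a b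
    unfolding u_def using base_outcome_simps n0 by auto
  have u_mem: "u a \<in> outcomes n m" if "a < m" for a
    unfolding u_def using base_outcome_mem that m by simp
  have x_mem: "x a b \<in> X" if "a < m" "b < m" "a \<noteq> b" for a b
    unfolding x_def by (rule orient_mem[OF X u_mem u_mem n0]) (use that u0 off in auto)
  have u_eq: "u a = u b \<longleftrightarrow> a = b" for a b by (metis u0)
  have x_neq: "x a b \<noteq> x a' b'" if "{a, b} \<noteq> {a', b'}" for a b a' b'
    using that unfolding x_def by (auto dest!: orient_eq_imp_doubleton_eq simp: doubleton_eq_iff u_eq)
  have concept: "cp_concept n m X N (x a b) \<longleftrightarrow>
      (snd N 0 (restrict (u 0) (fst N 0)) a b \<longleftrightarrow> \<sigma> a b)"
    if cp: "is_cpnet n m N" and ac: "is_acyclic_cpnet n N" and "a < m" "b < m" "a \<noteq> b" for N a b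
  proof -
    have "0 \<notin> fst N 0" using cp n0 unfolding is_cpnet_def by auto
    then have "restrict (u a) (fst N 0) = restrict (u 0) (fst N 0)"
      using off by (intro restrict_eq_if_agree_outside) auto
    moreover have "cp_concept n m X N (orient X (u a) (u b)) \<longleftrightarrow>
        (snd N 0 (restrict (u a) (fst N 0)) (u a 0) (u b 0) \<longleftrightarrow> (u a, u b) \<in> X)"
      by (rule cp_concept_orient[OF cp ac X u_mem u_mem n0]) (use that u0 off in auto)
    ultimately show ?thesis unfolding x_def \<sigma>_def u0 by simp
  qed
  show ?thesis
  proof (rule not_extremal_two_points)
    show "x 0 1 \<in> X" "x 1 2 \<in> X" "x 0 1 \<noteq> x 1 2"
      using x_mem x_neq[of 0 1 1 2] m by (auto simp: doubleton_eq_iff)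
  next
    fix b1 b2
    obtain N where N: "is_cpnet n m N" "is_acyclic_cpnet n N" "is_k_bounded n k N"
      and pref: "\<forall>i \<gamma>. (snd N i \<gamma> 0 1 \<longleftrightarrow> 1 < m \<and> (b1 \<longleftrightarrow> \<sigma> 0 1)) \<and>
        (snd N i \<gamma> 1 2 \<longleftrightarrow> 2 < m \<and> (b2 \<longleftrightarrow> \<sigma> 1 2))"
      using exists_separable_cpnet[of n m k "\<lambda>_. b1 \<longleftrightarrow> \<sigma> 0 1" "\<lambda>_. b2 \<longleftrightarrow> \<sigma> 1 2"] by blast
    have "cp_concept n m X N (x 0 1) = b1" "cp_concept n m X N (x 1 2) = b2"
      using concept[OF N(1,2), of 0 1] concept[OF N(1,2), of 1 2] pref m by auto
    then show "\<exists>c\<in>C_ac n m k X. c (x 0 1) = b1 \<and> c (x 1 2) = b2"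
      using cp_concept_in_C_ac[OF N(1-3)] by blast
  next
    fix c0 assume "c0 \<in> C_ac n m k X"
    define f where "f \<longleftrightarrow> (c0 (x 0 2) \<longleftrightarrow> \<sigma> 0 2)"
    show "\<exists>b1 b2. \<forall>c\<in>C_ac n m k X. c (x 0 1) = b1 \<longrightarrow> c (x 1 2) = b2 \<longrightarrow>
        (\<exists>y\<in>X - {x 0 1, x 1 2}. c y \<noteq> c0 y)"
    proof (intro exI ballI impI)
      fix c assume "c \<in> C_ac n m k X"
      then obtain N where cp: "is_cpnet n m N" and ac: "is_acyclic_cpnet n N"
        and c: "c = cp_concept n m X N" by (rule C_ac_elim)
      define R where "R = snd N 0 (restrict (u 0) (fst N 0))"
      have R: "strict_total_order_on {0..<m} R"
        unfolding R_def using strict_total_order_on_context[OF cp u_mem n0] m by simp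
      assume "c (x 0 1) = (\<not> f \<longleftrightarrow> \<sigma> 0 1)" "c (x 1 2) = (\<not> f \<longleftrightarrow> \<sigma> 1 2)"
      then have "R 0 1 = (\<not> f)" "R 1 2 = (\<not> f)"
        using concept[OF cp ac, of 0 1] concept[OF cp ac, of 1 2] m unfolding c R_def by auto
      then have "R 0 2 = (\<not> f)" using strict_total_order_on_triple[OF R, of 0 1 2] m by auto
      then have "c (x 0 2) \<noteq> c0 (x 0 2)"
        using concept[OF cp ac, of 0 2] m unfolding c R_def f_def by auto
      moreover have "x 0 2 \<in> X - {x 0 1, x 1 2}"
        using x_mem x_neq[of 0 2 0 1] x_neq[of 0 2 1 2] m by (auto simp: doubleton_eq_iff)
      ultimately show "\<exists>y\<in>X - {x 0 1, x 1 2}. c y \<noteq> c0 y" by blast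
    qed
  qed
qed

lemma not_acyclic_if_mutual_parents:
  assumes "i < n" "j < n" "j \<in> fst N i" "i \<in> fst N j"
  shows "\<not> is_acyclic_cpnet n N"
proof -
  let ?E = "{(j, i). i < n \<and> j \<in> fst N i}"
  have "(i, j) \<in> ?E" "(j, i) \<in> ?E" using assms by auto
  then have "(i, i) \<in> ?E\<^sup>+" by (meson r_into_trancl trancl_into_trancl)
  then show ?thesis unfolding is_acyclic_cpnet_def acyclic_def by blast
qed

lemma not_extremal_two_variables:
  assumes n: "2 \<le> n" and m: "2 \<le> m" and X: "is_swap_space n m X"
  shows "\<not> extremal X (C_ac n m k X)"
proof -
  define v where "v a b = base_outcome n a b" for a b
  define h where "h b = orient X (v 0 b) (v 1 b)" for b
  define w where "w a = orient X (v a 0) (v a 1)" for a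
  define \<sigma>\<^sub>0 where "\<sigma>\<^sub>0 b = ((v 0 b, v 1 b) \<in> X)" for b
  define \<sigma>\<^sub>1 where "\<sigma>\<^sub>1 a = ((v a 0, v a 1) \<in> X)" for a
  have n0: "0 < n" and n1: "1 < n" using n by auto
  have v0: "v a b 0 = a" and v1: "v a b 1 = b"
    and off0: "\<forall>j. j \<noteq> 0 \<longrightarrow> v a b j = v a' b j"
    and off1: "\<forall>j. j \<noteq> 1 \<longrightarrow> v a b j = v a b' j" for a a' b b'
    unfolding v_def using base_outcome_simps n0 n1 by auto
  have v_mem: "v a b \<in> outcomes n m" if "a < 2" "b < 2" for a b
    unfolding v_def using base_outcome_mem that m by simp
  have v_eq: "v a b = v a' b' \<longleftrightarrow> a = a' \<and> b = b'" for a b a' b' by (metis v0 v1)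
  have h_mem: "h b \<in> X" if "b < 2" for b
    unfolding h_def by (rule orient_mem[OF X v_mem v_mem n0]) (use that v0 off0 in auto)
  have w_mem: "w a \<in> X" if "a < 2" for a
    unfolding w_def by (rule orient_mem[OF X v_mem v_mem n1]) (use that v1 off1 in auto)
  have distinct: "h 0 \<noteq> w 0" "h 1 \<noteq> h 0" "h 1 \<noteq> w 0" "w 1 \<noteq> h 0" "w 1 \<noteq> w 0"
    unfolding h_def w_def
    by (auto dest!: orient_eq_imp_doubleton_eq simp: doubleton_eq_iff v_eq)
  have concept0: "cp_concept n m X N (h b) \<longleftrightarrow>
      (snd N 0 (restrict (v 0 b) (fst N 0)) 0 1 \<longleftrightarrow> \<sigma>\<^sub>0 b)"
    if cp: "is_cpnet n m N" and ac: "is_acyclic_cpnet n N" and "b < 2" for N b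
    using cp_concept_orient[OF cp ac X v_mem v_mem n0, of 0 b 1 b] that v0 off0
    unfolding h_def \<sigma>\<^sub>0_def by simp
  have concept1: "cp_concept n m X N (w a) \<longleftrightarrow>
      (snd N 1 (restrict (v a 0) (fst N 1)) 0 1 \<longleftrightarrow> \<sigma>\<^sub>1 a)"
    if cp: "is_cpnet n m N" and ac: "is_acyclic_cpnet n N" and "a < 2" for N a
    using cp_concept_orient[OF cp ac X v_mem v_mem n1, of a 0 a 1] that v1 off1
    unfolding w_def \<sigma>\<^sub>1_def by simp
  show ?thesis
  proof (rule not_extremal_two_points)
    show "h 0 \<in> X" "w 0 \<in> X" "h 0 \<noteq> w 0" using h_mem w_mem distinct by auto
  next
    fix b1 b2
    define d where "d i \<longleftrightarrow> (if i = 0 then b1 \<longleftrightarrow> \<sigma>\<^sub>0 0 else b2 \<longleftrightarrow> \<sigma>\<^sub>1 0)" for i :: nat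
    obtain N where N: "is_cpnet n m N" "is_acyclic_cpnet n N" "is_k_bounded n k N"
      and pref: "\<forall>i \<gamma>. (snd N i \<gamma> 0 1 \<longleftrightarrow> 1 < m \<and> d i) \<and> (snd N i \<gamma> 1 2 \<longleftrightarrow> 2 < m \<and> True)"
      using exists_separable_cpnet[of n m k d "\<lambda>_. True"] by blast
    have "1 < m" using m by simp
    then have "cp_concept n m X N (h 0) = b1" "cp_concept n m X N (w 0) = b2"
      using concept0[OF N(1,2), of 0] concept1[OF N(1,2), of 0] pref by (auto simp: d_def)
    then show "\<exists>c\<in>C_ac n m k X. c (h 0) = b1 \<and> c (w 0) = b2"
      using cp_concept_in_C_ac[OF N(1-3)] by blast
  next
    fix c0 assume "c0 \<in> C_ac n m k X"
    define f0 where "f0 \<longleftrightarrow> (c0 (h 1) \<longleftrightarrow> \<sigma>\<^sub>0 1)"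
    define f1 where "f1 \<longleftrightarrow> (c0 (w 1) \<longleftrightarrow> \<sigma>\<^sub>1 1)"
    show "\<exists>b1 b2. \<forall>c\<in>C_ac n m k X. c (h 0) = b1 \<longrightarrow> c (w 0) = b2 \<longrightarrow>
        (\<exists>y\<in>X - {h 0, w 0}. c y \<noteq> c0 y)"
    proof (intro exI ballI impI)
      fix c assume "c \<in> C_ac n m k X"
      then obtain N where cp: "is_cpnet n m N" and ac: "is_acyclic_cpnet n N"
        and c: "c = cp_concept n m X N" by (rule C_ac_elim)
      assume "c (h 0) = (\<not> f0 \<longleftrightarrow> \<sigma>\<^sub>0 0)" "c (w 0) = (\<not> f1 \<longleftrightarrow> \<sigma>\<^sub>1 0)"
      then have at_zero: "snd N 0 (restrict (v 0 0) (fst N 0)) 0 1 \<longleftrightarrow> \<not> f0"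
          "snd N 1 (restrict (v 0 0) (fst N 1)) 0 1 \<longleftrightarrow> \<not> f1"
        using concept0[OF cp ac, of 0] concept1[OF cp ac, of 0] unfolding c by auto
      show "\<exists>y\<in>X - {h 0, w 0}. c y \<noteq> c0 y"
      proof (rule ccontr)
        assume "\<not> (\<exists>y\<in>X - {h 0, w 0}. c y \<noteq> c0 y)"
        then have "c (h 1) = c0 (h 1)" "c (w 1) = c0 (w 1)" using h_mem w_mem distinct by auto
        then have at_one: "snd N 0 (restrict (v 0 1) (fst N 0)) 0 1 \<longleftrightarrow> f0"
            "snd N 1 (restrict (v 1 0) (fst N 1)) 0 1 \<longleftrightarrow> f1"
          using concept0[OF cp ac, of 1] concept1[OF cp ac, of 1] unfolding c f0_def f1_def by auto
        have "1 \<in> fst N 0"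
          by (rule parent_if_preference_varies[of 1 "v 0 0" "v 0 1"]) (use off1 at_zero at_one in auto)
        moreover have "0 \<in> fst N 1"
          by (rule parent_if_preference_varies[of 0 "v 0 0" "v 1 0"]) (use off0 at_zero at_one in auto)
        ultimately show False using not_acyclic_if_mutual_parents[OF n0 n1] ac by blast
      qed
    qed
  qed
qed

theorem proposition5:
  fixes n m k :: nat and X :: "(outcome \<times> outcome) set"
  assumes "n \<ge> 1" and "m \<ge> 2" and "k \<le> n - 1" and "(m, k) \<noteq> (2, 0)"
    and "is_swap_space n m X"
  shows "\<not> extremal X (C_ac n m k X)"
proof (cases "m \<ge> 3")
  case True
  then show ?thesis using not_extremal_large_domain assms by blast
next
  case False
  then have "m = 2" "k \<ge> 1" using assms by auto
  then have "n \<ge> 2" using assms by linarith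
  then show ?thesis using not_extremal_two_variables assms by blast
qed

end
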